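(* Let $A$ be a set of vertices in a Johnson graph $J(m,k)$ that is shattered by the edge relation, and assume $|A|\ge 4$. Then there do not exist three vertices in $A$ that are pairwise at distance $2$ from each other.
   Context: For $m\ge k$ and a set $X$ with $|X|=m$, the Johnson graph $J(m,k)$ has as vertices the $k$-element subsets of $X$, two vertices adjacent iff their symmetric difference has size $2$. $N(v)$ is the set of vertices adjacent to $v$ and $d$ is graph distance. A set $A$ of vertices of a graph $G$ is shattered by the edge relation if $\{A\cap N(w)\mid w\in V(G)\}$ is the full power set of $A$. *)

theory Defs
  imports Main "HOL-Library.Extended_Nat"
begin

text \<open>Johnson graph J(m,k) on a ground set X with card X = m:
  vertices are the k-element subsets of X, adjacent iff the symmetric
  difference has exactly 2 elements.\<close>

definition johnson_vertices :: "'a set \<Rightarrow> nat \<Rightarrow> 'a set set" where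
  "johnson_vertices X k = {S. S \<subseteq> X \<and> card S = k}"

definition johnson_adj :: "'a set \<Rightarrow> 'a set \<Rightarrow> bool" where
  "johnson_adj S T \<longleftrightarrow> card ((S - T) \<union> (T - S)) = 2"

definition nbhd :: "'v set \<Rightarrow> ('v \<Rightarrow> 'v \<Rightarrow> bool) \<Rightarrow> 'v \<Rightarrow> 'v set" where
  "nbhd V E v = {w \<in> V. E v w}"

definition is_walk :: "'v set \<Rightarrow> ('v \<Rightarrow> 'v \<Rightarrow> bool) \<Rightarrow> 'v list \<Rightarrow> 'v \<Rightarrow> 'v \<Rightarrow> nat \<Rightarrow> bool" where
  "is_walk V E p u v n \<longleftrightarrow> length p = Suc n \<and> hd p = u \<and> last p = v \<and> set p \<subseteq> V
     \<and> (\<forall>i<n. E (p ! i) (p ! Suc i))"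

text \<open>Graph distance (infinity if no walk exists).\<close>
definition gdist :: "'v set \<Rightarrow> ('v \<Rightarrow> 'v \<Rightarrow> bool) \<Rightarrow> 'v \<Rightarrow> 'v \<Rightarrow> enat" where
  "gdist V E u v = Inf {enat n | n. \<exists>p. is_walk V E p u v n}"

definition shattered :: "'v set \<Rightarrow> ('v \<Rightarrow> 'v \<Rightarrow> bool) \<Rightarrow> 'v set \<Rightarrow> bool" where
  "shattered V E A \<longleftrightarrow> {A \<inter> nbhd V E w | w. w \<in> V} = Pow A"

end

theory Submission
  imports Defs
begin

text \<open>Vertices u, v of J(m,k) at distance 2 satisfy |u - v| = 2.
  If u, v, w are pairwise at distance 2, every common neighbour z of all three is squeezed
  between u \<inter> v and u \<union> v (and likewise for the other pairs), which forces
  z = (u \<inter> v) \<union> (v \<inter> w) \<union> (u \<inter> w).  Shattering a fourth vertex x of A away from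
  u, v, w yields two vertices adjacent to u, v, w, one adjacent to x and one not;
  they would both equal this set.\<close>

lemma gdist_le_walk:
  assumes "is_walk V E p u v n"
  shows "gdist V E u v \<le> enat n"
  unfolding gdist_def using assms by (blast intro: Inf_lower)

lemma gdist_enat_obtains_walk:
  assumes "gdist V E u v = enat n"
  obtains p where "is_walk V E p u v n"
proof -
  let ?L = "{enat n | n. \<exists>p. is_walk V E p u v n}"
  have "?L \<noteq> {}"
    using assms unfolding gdist_def by (auto simp: Inf_enat_def split: if_splits)
  then have "Inf ?L \<in> ?L"
    unfolding Inf_enat_def by (metis (mono_tags, lifting) LeastI ex_in_conv)
  then show thesis
    using assms that unfolding gdist_def by auto
qed

lemma is_walk_singleton: "u \<in> V \<Longrightarrow> is_walk V E [u] u u 0"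
  unfolding is_walk_def by simp

lemma is_walk_edge: "u \<in> V \<Longrightarrow> v \<in> V \<Longrightarrow> E u v \<Longrightarrow> is_walk V E [u, v] u v 1"
  unfolding is_walk_def by simp

lemma is_walk_length_2_obtains_middle:
  assumes "is_walk V E p u v 2"
  obtains z where "z \<in> V" "E u z" "E z v"
proof -
  obtain a b c where "p = [a, b, c]"
    using assms unfolding is_walk_def by (auto simp: numeral_eq_Suc length_Suc_conv)
  then show thesis
    using assms that unfolding is_walk_def by (auto simp: less_Suc_eq numeral_eq_Suc)
qed

lemma gdist_eq_2_D:
  assumes "gdist V E u v = 2" and "u \<in> V" and "v \<in> V"
  shows "u \<noteq> v" and "\<not> E u v" and "\<exists>z\<in>V. E u z \<and> E z v"
proof -
  show "u \<noteq> v"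
    using gdist_le_walk[OF is_walk_singleton[OF \<open>u \<in> V\<close>]] assms(1)
    by (auto simp: zero_enat_def[symmetric])
  show "\<not> E u v"
  proof
    assume "E u v"
    from gdist_le_walk[OF is_walk_edge[of u V v E, OF \<open>u \<in> V\<close> \<open>v \<in> V\<close> this]] assms(1)
    show False by (simp add: one_enat_def[symmetric])
  qed
  have "gdist V E u v = enat 2"
    using assms(1) by (simp add: numeral_eq_enat)
  then obtain p where "is_walk V E p u v 2"
    by (rule gdist_enat_obtains_walk)
  then show "\<exists>z\<in>V. E u z \<and> E z v"
    by (blast elim: is_walk_length_2_obtains_middle)
qed

lemma card_Diff_eq_of_card_eq:
  assumes "finite S" "finite T" "card S = card T"
  shows "card (S - T) = card (T - S)"
  using card_Int_Diff[OF assms(1), of T] card_Int_Diff[OF assms(2), of S] assms(3)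
  by (simp add: Int_commute)

lemma johnson_adj_iff_card_Diff:
  assumes "finite S" "finite T" "card S = card T"
  shows "johnson_adj S T \<longleftrightarrow> card (S - T) = 1"
proof -
  have "card ((S - T) \<union> (T - S)) = card (S - T) + card (T - S)"
    using assms by (intro card_Un_disjoint) auto
  then show ?thesis
    unfolding johnson_adj_def using card_Diff_eq_of_card_eq[OF assms] by linarith
qed

lemma card_le_card_add_of_subset_Un:
  assumes "finite B" "finite C" "A \<subseteq> B \<union> C"
  shows "card A \<le> card B + card C"
  using card_mono[OF _ assms(3)] card_Un_le[of B C] assms(1,2) by simp

text \<open>Both inclusions come from u - v \<subseteq> (u - z) \<union> (z - v): a point violating
  one of them could be deleted from one of the two pieces, leaving room for at most
  one point of u - v.\<close>

lemma card_Diff_eq_2_between: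
  assumes "finite u" "finite z"
    and "card (u - v) = 2" "card (u - z) = 1" "card (z - v) = 1"
  shows "u \<inter> v \<subseteq> z" and "z \<subseteq> u \<union> v"
proof -
  have fin: "finite (u - z)" "finite (z - v)"
    using assms(1,2) by auto
  show "u \<inter> v \<subseteq> z"
  proof
    fix y assume y: "y \<in> u \<inter> v"
    show "y \<in> z"
    proof (rule ccontr)
      assume "y \<notin> z"
      then have "card (u - z - {y}) = 0"
        using y assms(4) by simp
      moreover have "card (u - v) \<le> card (u - z - {y}) + card (z - v)"
        using y fin by (intro card_le_card_add_of_subset_Un) auto
      ultimately show False
        using assms(3,5) by simp
    qed
  qed
  show "z \<subseteq> u \<union> v"
  proof
    fix y assume y: "y \<in> z"
    show "y \<in> u \<union> v"
    proof (rule ccontr)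
      assume "y \<notin> u \<union> v"
      then have "card (z - v - {y}) = 0"
        using y assms(5) by simp
      moreover have "card (u - v) \<le> card (u - z) + card (z - v - {y})"
        using \<open>y \<notin> u \<union> v\<close> fin by (intro card_le_card_add_of_subset_Un) auto
      ultimately show False
        using assms(3,4) by simp
    qed
  qed
qed

lemma johnson_vertices_finite_card:
  assumes "finite X" "S \<in> johnson_vertices X k"
  shows "finite S" and "card S = k"
  using assms unfolding johnson_vertices_def by (auto intro: finite_subset)

lemma johnson_gdist_eq_2_imp_card_Diff:
  assumes X: "finite X"
    and u: "u \<in> johnson_vertices X k" and v: "v \<in> johnson_vertices X k"
    and dist: "gdist (johnson_vertices X k) johnson_adj u v = 2"
  shows "card (u - v) = 2"
proof -
  note uk = johnson_vertices_finite_card[OF X u] and vk = johnson_vertices_finite_card[OF X v]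
  obtain z where z: "z \<in> johnson_vertices X k" "johnson_adj u z" "johnson_adj z v"
    using gdist_eq_2_D(3)[OF dist u v] by blast
  note zk = johnson_vertices_finite_card[OF X z(1)]
  have "card (u - v) \<le> card (u - z) + card (z - v)"
    using uk zk by (intro card_le_card_add_of_subset_Un) auto
  also have "\<dots> = 2"
    using z uk vk zk by (simp add: johnson_adj_iff_card_Diff)
  finally have "card (u - v) \<le> 2" .
  moreover have "card (u - v) \<noteq> 1"
    using gdist_eq_2_D(2)[OF dist u v] uk vk by (simp add: johnson_adj_iff_card_Diff)
  moreover have "card (u - v) \<noteq> 0"
  proof
    assume "card (u - v) = 0"
    then have "u \<subseteq> v"
      using uk by simp
    then show False
      using gdist_eq_2_D(1)[OF dist u v] uk vk card_subset_eq by metis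
  qed
  ultimately show ?thesis
    by linarith
qed

lemma johnson_common_nbr_of_triangle:
  assumes X: "finite X"
    and V: "u \<in> johnson_vertices X k" "v \<in> johnson_vertices X k" "w \<in> johnson_vertices X k"
      "z \<in> johnson_vertices X k"
    and uv: "card (u - v) = 2" and vw: "card (v - w) = 2" and uw: "card (u - w) = 2"
    and adj_z: "johnson_adj z u" "johnson_adj z v" "johnson_adj z w"
  shows "z = (u \<inter> v) \<union> (v \<inter> w) \<union> (u \<inter> w)"
proof -
  have adj: "card (x - z) = 1 \<and> card (z - x) = 1" if "x \<in> {u, v, w}" for x
  proof -
    have x: "x \<in> johnson_vertices X k" "johnson_adj z x"
      using that V adj_z by auto
    note xk = johnson_vertices_finite_card[OF X x(1)] and zk = johnson_vertices_finite_card[OF X V(4)]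
    show ?thesis
      using x(2) xk zk card_Diff_eq_of_card_eq[of z x]
      by (simp add: johnson_adj_iff_card_Diff)
  qed
  have fin: "finite u" "finite v" "finite z"
    using johnson_vertices_finite_card(1)[OF X] V by simp_all
  have "u \<inter> v \<subseteq> z" "z \<subseteq> u \<union> v"
    using card_Diff_eq_2_between[OF fin(1,3) uv] adj[of u] adj[of v] by simp_all
  moreover have "v \<inter> w \<subseteq> z" "z \<subseteq> v \<union> w"
    using card_Diff_eq_2_between[OF fin(2,3) vw] adj[of v] adj[of w] by simp_all
  moreover have "u \<inter> w \<subseteq> z" "z \<subseteq> u \<union> w"
    using card_Diff_eq_2_between[OF fin(1,3) uw] adj[of u] adj[of w] by simp_all
  ultimately show ?thesis
    by blast
qed

lemma shattered_obtains_nbhd: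
  assumes "shattered V E A" "B \<subseteq> A"
  obtains z where "z \<in> V" "A \<inter> nbhd V E z = B"
proof -
  have "B \<in> {A \<inter> nbhd V E w | w. w \<in> V}"
    using assms unfolding shattered_def by blast
  then show thesis
    using that by blast
qed

lemma shattered_separates:
  assumes "shattered V E A" "x \<in> A"
  obtains z1 z2 where "z1 \<in> V" "z2 \<in> V" "\<forall>y\<in>A. E z1 y"
    "\<forall>y\<in>A - {x}. E z2 y" "\<not> E z2 x"
proof -
  obtain z1 where z1: "z1 \<in> V" "A \<inter> nbhd V E z1 = A"
    using shattered_obtains_nbhd[OF assms(1), of A] by blast
  obtain z2 where z2: "z2 \<in> V" "A \<inter> nbhd V E z2 = A - {x}"
    using shattered_obtains_nbhd[OF assms(1), of "A - {x}"] by blast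
  show thesis
  proof (rule that[OF z1(1) z2(1)])
    have "A \<subseteq> nbhd V E z1" "A - {x} \<subseteq> nbhd V E z2" "x \<notin> nbhd V E z2"
      using z1(2) z2(2) assms(2) by auto
    then show "\<forall>y\<in>A. E z1 y" "\<forall>y\<in>A - {x}. E z2 y" "\<not> E z2 x"
      using assms(2) unfolding nbhd_def by auto
  qed
qed

theorem mainTheorem6:
  fixes X :: "'a set" and m k :: nat and A :: "'a set set"
  assumes "finite X" and "card X = m" and "k \<le> m"
    and "A \<subseteq> johnson_vertices X k"
    and "shattered (johnson_vertices X k) johnson_adj A"
    and "card A \<ge> 4"
  shows "\<not> (\<exists>u\<in>A. \<exists>v\<in>A. \<exists>w\<in>A.
            gdist (johnson_vertices X k) johnson_adj u v = 2 \<and>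
            gdist (johnson_vertices X k) johnson_adj v w = 2 \<and>
            gdist (johnson_vertices X k) johnson_adj u w = 2)"
proof
  let ?V = "johnson_vertices X k"
  assume "\<exists>u\<in>A. \<exists>v\<in>A. \<exists>w\<in>A. gdist ?V johnson_adj u v = 2 \<and>
            gdist ?V johnson_adj v w = 2 \<and> gdist ?V johnson_adj u w = 2"
  then obtain u v w where A: "u \<in> A" "v \<in> A" "w \<in> A"
    and dist: "gdist ?V johnson_adj u v = 2" "gdist ?V johnson_adj v w = 2"
      "gdist ?V johnson_adj u w = 2"
    by blast
  have V: "u \<in> ?V" "v \<in> ?V" "w \<in> ?V"
    using A assms(4) by auto
  note card = johnson_gdist_eq_2_imp_card_Diff[OF assms(1) V(1,2) dist(1)]
    johnson_gdist_eq_2_imp_card_Diff[OF assms(1) V(2,3) dist(2)]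
    johnson_gdist_eq_2_imp_card_Diff[OF assms(1) V(1,3) dist(3)]
  have common_nbr: "z = (u \<inter> v) \<union> (v \<inter> w) \<union> (u \<inter> w)"
    if "z \<in> ?V" "johnson_adj z u" "johnson_adj z v" "johnson_adj z w" for z
    by (rule johnson_common_nbr_of_triangle[OF assms(1) V that(1) card that(2-4)])
  have "card {u, v, w} \<le> 3"
    by (simp add: card_insert_le_m1)
  then have "\<not> A \<subseteq> {u, v, w}"
    using card_mono[of "{u, v, w}" A] assms(6) by auto
  then obtain x where x: "x \<in> A" "x \<notin> {u, v, w}"
    by blast
  obtain z1 z2 where z: "z1 \<in> ?V" "z2 \<in> ?V" "\<forall>y\<in>A. johnson_adj z1 y"
    "\<forall>y\<in>A - {x}. johnson_adj z2 y" "\<not> johnson_adj z2 x"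
    using shattered_separates[OF assms(5) x(1)] .
  have "z1 = z2"
    using common_nbr[OF z(1)] common_nbr[OF z(2)] z(3,4) A x(2) by auto
  then show False
    using z(3,5) x(1) by blast
qed

end
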